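(* Let $\alpha\ge4$ and let $N'$, $M_l$, $C_j$ be as produced by the clustering procedure, and $Z_l=\sum_{j\in M_l}y_j$. If $i\in N'$ satisfies $Z_i<1$, then $N'\setminus\{i\}\neq\emptyset$ and there exists $l\in N'\setminus\{i\}$ with $c_{il}\le \frac{2C_i}{1-Z_i}$.
   Context: Setting: finite set $N$ of locations, capacity $M>0$, demands $d_j\ge0$, integer $k\ge1$, metric costs $c_{ij}$ on $N$ (nonnegative, $c_{ii}=0$, symmetric, triangle inequality). $(x,y)$ is an optimal solution of the LP-relaxation: minimize $\sum_{i,j}d_jc_{ij}x_{ij}$ s.t. $\sum_{i}x_{ij}=1$ ($j\in N$), $\sum_j d_jx_{ij}\le My_i$ ($i\in N$), $\sum_i y_i\le k$, $0\le x_{ij}\le y_i$, $0\le y_i\le1$. For $j\in N$ let $C_j=\sum_{i\in N}c_{ij}x_{ij}$. Clustering procedure: order the locations as $1,\dots,n$ so that $C_1\le\dots\le C_n$ (ties arbitrary); start with $N'=\emptyset$; for $j=1,\dots,n$ in turn, if there is no $l\in N'$ with $c_{lj}\le 2\alpha C_j$, add $j$ to $N'$. Then for each $j\in N$ let $N'(j)$ be a closest element of $N'$ to $j$ (ties arbitrary), and set $M_l=\{j\in N: N'(j)=l\}$ for $l\in N'$. *)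

theory Defs
  imports Complex_Main
begin

definition metric_on :: "'a set \<Rightarrow> ('a \<Rightarrow> 'a \<Rightarrow> real) \<Rightarrow> bool" where
  "metric_on N c \<longleftrightarrow>
     (\<forall>i\<in>N. \<forall>j\<in>N. c i j \<ge> 0) \<and> (\<forall>i\<in>N. c i i = 0) \<and>
     (\<forall>i\<in>N. \<forall>j\<in>N. c i j = c j i) \<and>
     (\<forall>i\<in>N. \<forall>j\<in>N. \<forall>l\<in>N. c i l \<le> c i j + c j l)"

text \<open>Feasibility for the LP relaxation (x i j = fraction of j served by i).\<close>
definition lp_feasible ::
  "'a set \<Rightarrow> real \<Rightarrow> ('a \<Rightarrow> real) \<Rightarrow> nat \<Rightarrow> ('a \<Rightarrow> 'a \<Rightarrow> real) \<Rightarrow> ('a \<Rightarrow> real) \<Rightarrow> bool" where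
  "lp_feasible N M d k x y \<longleftrightarrow>
     (\<forall>j\<in>N. (\<Sum>i\<in>N. x i j) = 1) \<and>
     (\<forall>i\<in>N. (\<Sum>j\<in>N. d j * x i j) \<le> M * y i) \<and>
     (\<Sum>i\<in>N. y i) \<le> real k \<and>
     (\<forall>i\<in>N. \<forall>j\<in>N. 0 \<le> x i j \<and> x i j \<le> y i) \<and>
     (\<forall>i\<in>N. 0 \<le> y i \<and> y i \<le> 1)"

definition lp_cost ::
  "'a set \<Rightarrow> ('a \<Rightarrow> real) \<Rightarrow> ('a \<Rightarrow> 'a \<Rightarrow> real) \<Rightarrow> ('a \<Rightarrow> 'a \<Rightarrow> real) \<Rightarrow> real" where
  "lp_cost N d c x = (\<Sum>i\<in>N. \<Sum>j\<in>N. d j * c i j * x i j)"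

definition lp_optimal ::
  "'a set \<Rightarrow> real \<Rightarrow> ('a \<Rightarrow> real) \<Rightarrow> nat \<Rightarrow> ('a \<Rightarrow> 'a \<Rightarrow> real)
    \<Rightarrow> ('a \<Rightarrow> 'a \<Rightarrow> real) \<Rightarrow> ('a \<Rightarrow> real) \<Rightarrow> bool" where
  "lp_optimal N M d k c x y \<longleftrightarrow> lp_feasible N M d k x y \<and>
     (\<forall>x' y'. lp_feasible N M d k x' y' \<longrightarrow> lp_cost N d c x \<le> lp_cost N d c x')"

definition Cval :: "'a set \<Rightarrow> ('a \<Rightarrow> 'a \<Rightarrow> real) \<Rightarrow> ('a \<Rightarrow> 'a \<Rightarrow> real) \<Rightarrow> 'a \<Rightarrow> real" where
  "Cval N c x j = (\<Sum>i\<in>N. c i j * x i j)"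

text \<open>Greedy clustering: scan the list in order; acc is the current N'.\<close>
fun cluster_scan :: "real \<Rightarrow> ('a \<Rightarrow> 'a \<Rightarrow> real) \<Rightarrow> ('a \<Rightarrow> real) \<Rightarrow> 'a list \<Rightarrow> 'a list \<Rightarrow> 'a list" where
  "cluster_scan \<alpha> c C acc [] = acc"
| "cluster_scan \<alpha> c C acc (j # js) =
     cluster_scan \<alpha> c C
       (if (\<exists>l\<in>set acc. c l j \<le> 2 * \<alpha> * C j) then acc else acc @ [j]) js"

definition cluster_centers :: "real \<Rightarrow> ('a \<Rightarrow> 'a \<Rightarrow> real) \<Rightarrow> ('a \<Rightarrow> real) \<Rightarrow> 'a list \<Rightarrow> 'a set" where
  "cluster_centers \<alpha> c C ord = set (cluster_scan \<alpha> c C [] ord)"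

definition valid_order :: "'a set \<Rightarrow> ('a \<Rightarrow> real) \<Rightarrow> 'a list \<Rightarrow> bool" where
  "valid_order N C ord \<longleftrightarrow> distinct ord \<and> set ord = N \<and> sorted_wrt (\<lambda>a b. C a \<le> C b) ord"

definition closest_assignment :: "'a set \<Rightarrow> 'a set \<Rightarrow> ('a \<Rightarrow> 'a \<Rightarrow> real) \<Rightarrow> ('a \<Rightarrow> 'a) \<Rightarrow> bool" where
  "closest_assignment N N' c nearest \<longleftrightarrow>
     (\<forall>j\<in>N. nearest j \<in> N' \<and> (\<forall>l\<in>N'. c j (nearest j) \<le> c j l))"

definition cluster_members :: "'a set \<Rightarrow> ('a \<Rightarrow> 'a) \<Rightarrow> 'a \<Rightarrow> 'a set" where
  "cluster_members N nearest l = {j\<in>N. nearest j = l}"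

end

theory Submission
  imports Defs
begin

(* Let Z = sum of y over the cluster M_i of the centre i and let
   S = N - M_i be the locations assigned to other centres.  Since x_ji <= y_j, the
   fractional demand of i served from inside M_i is at most Z, so at least 1 - Z > 0 of
   it is served from S; in particular S is nonempty.  Let j0 be a location of S closest
   to i.  Every location of S is at least c_i,j0 away from i, hence C_i >= c_i,j0 (1 - Z).
   The centre l = N'(j0) differs from i, and as i is itself a candidate centre for j0,
   c_j0,l <= c_j0,i, so c_il <= 2 c_i,j0 <= 2 C_i / (1 - Z). *)

lemma cluster_scan_subset: "set (cluster_scan \<alpha> c C acc js) \<subseteq> set acc \<union> set js"
  by (induction js arbitrary: acc) (auto, fastforce+)

lemma cluster_centers_subset:
  assumes "valid_order N C ord"
  shows "cluster_centers \<alpha> c C ord \<subseteq> N"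
  using cluster_scan_subset[of \<alpha> c C "[]" ord] assms
  unfolding cluster_centers_def valid_order_def by auto

text \<open>In a feasible solution the demand of i is served from outside a set A of facilities
  to an extent of at least 1 minus the total opening of A, because x_ji <= y_j.\<close>
lemma mass_outside:
  assumes "finite N" and "A \<subseteq> N" and "i \<in> N" and "lp_feasible N M d k x y"
  shows "1 - (\<Sum>j\<in>A. y j) \<le> (\<Sum>j\<in>N - A. x j i)"
proof -
  have "(\<Sum>j\<in>A. x j i) \<le> (\<Sum>j\<in>A. y j)"
    using assms(2-4) by (intro sum_mono) (auto simp: lp_feasible_def)
  moreover have "(\<Sum>j\<in>N. x j i) = (\<Sum>j\<in>A. x j i) + (\<Sum>j\<in>N - A. x j i)"
    using sum.subset_diff[OF assms(2,1)] by (simp add: add.commute)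
  moreover have "(\<Sum>j\<in>N. x j i) = 1"
    using assms(3,4) by (auto simp: lp_feasible_def)
  ultimately show ?thesis by linarith
qed

lemma Cval_lower_bound:
  assumes "finite N" and "S \<subseteq> N" and "i \<in> N" and "lp_feasible N M d k x y"
    and "metric_on N c" and "\<forall>j\<in>S. m \<le> c j i"
  shows "m * (\<Sum>j\<in>S. x j i) \<le> Cval N c x i"
proof -
  have x_nonneg: "\<forall>j\<in>N. 0 \<le> x j i"
    using assms(3,4) by (auto simp: lp_feasible_def)
  have c_nonneg: "\<forall>j\<in>N. 0 \<le> c j i"
    using assms(3,5) by (auto simp: metric_on_def)
  have "m * (\<Sum>j\<in>S. x j i) = (\<Sum>j\<in>S. m * x j i)"
    by (simp add: sum_distrib_left)
  also have "\<dots> \<le> (\<Sum>j\<in>S. c j i * x j i)"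
    using assms(2,6) x_nonneg by (intro sum_mono mult_right_mono) auto
  also have "\<dots> \<le> (\<Sum>j\<in>N. c j i * x j i)"
    using assms(1,2) x_nonneg c_nonneg by (intro sum_mono2) auto
  finally show ?thesis unfolding Cval_def .
qed

text \<open>Reassigning a location j to its closest centre costs at most twice its distance to
  any centre i: c_(N'(j)),j <= c_ij by closeness, then the triangle inequality.\<close>
lemma closest_center_bound:
  assumes "metric_on N c" and "closest_assignment N N' c nearest" and "N' \<subseteq> N"
    and "i \<in> N'" and "j \<in> N"
  shows "c i (nearest j) \<le> 2 * c i j"
proof -
  have l: "nearest j \<in> N" "c j (nearest j) \<le> c j i"
    using assms(2-5) by (auto simp: closest_assignment_def)
  have "i \<in> N" using assms(3,4) by blast
  then have "c i (nearest j) \<le> c i j + c j (nearest j)" and "c j i = c i j"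
    using assms(1,5) l(1) by (auto simp: metric_on_def)
  then show ?thesis using l(2) by linarith
qed

theorem mainTheorem5:
  fixes N :: "'a set" and M \<alpha> :: real and d y :: "'a \<Rightarrow> real" and k :: nat
    and c x :: "'a \<Rightarrow> 'a \<Rightarrow> real" and ord :: "'a list" and nearest :: "'a \<Rightarrow> 'a"
    and i :: 'a
  assumes "finite N" and "M > 0" and "\<forall>j\<in>N. d j \<ge> 0" and "k \<ge> 1"
    and "metric_on N c"
    and "lp_optimal N M d k c x y"
    and "\<alpha> \<ge> 4"
    and "valid_order N (Cval N c x) ord"
    and "closest_assignment N (cluster_centers \<alpha> c (Cval N c x) ord) c nearest"
    and "i \<in> cluster_centers \<alpha> c (Cval N c x) ord"
    and "(\<Sum>j\<in>cluster_members N nearest i. y j) < 1"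
  shows "cluster_centers \<alpha> c (Cval N c x) ord - {i} \<noteq> {} \<and>
         (\<exists>l\<in>cluster_centers \<alpha> c (Cval N c x) ord - {i}.
            c i l \<le> 2 * Cval N c x i / (1 - (\<Sum>j\<in>cluster_members N nearest i. y j)))"
proof -
  define N' where "N' = cluster_centers \<alpha> c (Cval N c x) ord"
  define Mi where "Mi = cluster_members N nearest i"
  define Z where "Z = (\<Sum>j\<in>Mi. y j)"
  define S where "S = N - Mi"
  have feasible: "lp_feasible N M d k x y" using assms(6) by (simp add: lp_optimal_def)
  have N'_sub: "N' \<subseteq> N" unfolding N'_def by (rule cluster_centers_subset[OF assms(8)])
  have iN: "i \<in> N" using assms(10) N'_sub N'_def by blast
  have mass: "1 - Z \<le> (\<Sum>j\<in>S. x j i)"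
    unfolding Z_def S_def Mi_def cluster_members_def
    using mass_outside[OF assms(1) _ iN feasible] by auto
  then have "S \<noteq> {}" using assms(11) Z_def Mi_def by auto
  then obtain j0 where j0: "j0 \<in> S" and j0_min: "\<forall>j\<in>S. c i j0 \<le> c i j"
    using arg_min_if_finite[of S "c i"] assms(1) S_def by (metis finite_Diff not_le)
  have j0N: "j0 \<in> N" using j0 S_def by blast
  have "\<forall>j\<in>S. c i j0 \<le> c j i" using j0_min assms(5) iN S_def by (auto simp: metric_on_def)
  then have "c i j0 * (\<Sum>j\<in>S. x j i) \<le> Cval N c x i"
    using Cval_lower_bound[OF assms(1) _ iN feasible assms(5)] S_def by blast
  moreover have "0 \<le> c i j0" using assms(5) iN j0N by (simp add: metric_on_def)
  ultimately have C_bound: "c i j0 * (1 - Z) \<le> Cval N c x i"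
    using mass by (meson mult_left_mono order_trans)
  define l where "l = nearest j0"
  have lN': "l \<in> N'" using assms(9) j0N by (simp add: l_def N'_def closest_assignment_def)
  have "l \<noteq> i" using j0 by (simp add: l_def S_def Mi_def cluster_members_def)
  have "c i l \<le> 2 * c i j0"
    using closest_center_bound[OF assms(5) _ N'_sub _ j0N] assms(9,10) l_def N'_def by blast
  also have "\<dots> \<le> 2 * Cval N c x i / (1 - Z)"
    using C_bound assms(11) Z_def Mi_def by (simp add: field_simps)
  finally show ?thesis using lN' \<open>l \<noteq> i\<close> unfolding N'_def Z_def Mi_def by blast
qed

end
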